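(* For any $\lambda\in[0,1]$, $\alpha>0$, $\beta\ge0$, one has $\tau_1>\tau_2>\tau_3>0$ and $\tau_3\le\boldsymbol{T}_*$, where $\boldsymbol{T}_*=\inf\{T^\lambda(z):z\notin\operatorname{argmin}\phi\}$.
   Context: Let $\phi:\mathbb{R}^n\to\mathbb{R}$ be twice continuously differentiable and convex with $L$-Lipschitz gradient, attaining its minimum. For $z\in\mathbb{R}^n$, $x_z$ is the unique $C^1([0,\infty))\cap C^2((0,\infty))$ solution of $\ddot x(t)+\frac{\alpha}{t}\dot x(t)+\beta\nabla^2\phi(x(t))\dot x(t)+\nabla\phi(x(t))=0$ ($t>0$), $x(0)=z$, $\dot x(0)=0$. For $\lambda\in[0,1]$: $\varphi_{z,\lambda}(t)=\frac12\frac{d}{dt}\|\dot x_z(t)\|^2+\lambda\frac{\alpha}{t}\|\dot x_z(t)\|^2$ and $T^\lambda(z)=\inf\{t>0:\varphi_{z,\lambda}(t)\le0\}$. Let $H(t)=1-\frac{\beta Lt}{\alpha+2}-\frac{Lt^2}{2(\alpha+3)}$; $\tau_1=-\frac{\alpha+3}{\alpha+2}\beta+\sqrt{\left(\frac{\alpha+3}{\alpha+2}\right)^2\beta^2+\frac{2(\alpha+3)}{L}}$ (positive zero of $H$); $\tau_2=-\frac{\alpha+3}{\alpha+2}\beta+\sqrt{\left(\frac{\alpha+3}{\alpha+2}\right)^2\beta^2+\frac{\alpha+3}{L}}$ (where $H=\frac12$); $G(t)=(1+\alpha\lambda)H(t)^2-\alpha(1-\lambda)(1-H(t))^2-\beta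 Lt-\frac{Lt^2}{2}-|1+\alpha(2\lambda-1)|\,H(t)(1-H(t))$; and $\tau_3$ is the unique zero of $G$ in $(0,\tau_2)$. *)

theory Defs
  imports "HOL-Analysis.Analysis"
begin

definition Hfun :: "real \<Rightarrow> real \<Rightarrow> real \<Rightarrow> real \<Rightarrow> real" where
  "Hfun \<alpha> \<beta> L t = 1 - \<beta> * L * t / (\<alpha> + 2) - L * t\<^sup>2 / (2 * (\<alpha> + 3))"

definition tau1 :: "real \<Rightarrow> real \<Rightarrow> real \<Rightarrow> real" where
  "tau1 \<alpha> \<beta> L = - ((\<alpha> + 3) / (\<alpha> + 2)) * \<beta>
     + sqrt (((\<alpha> + 3) / (\<alpha> + 2))\<^sup>2 * \<beta>\<^sup>2 + 2 * (\<alpha> + 3) / L)"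

definition tau2 :: "real \<Rightarrow> real \<Rightarrow> real \<Rightarrow> real" where
  "tau2 \<alpha> \<beta> L = - ((\<alpha> + 3) / (\<alpha> + 2)) * \<beta>
     + sqrt (((\<alpha> + 3) / (\<alpha> + 2))\<^sup>2 * \<beta>\<^sup>2 + (\<alpha> + 3) / L)"

definition Gfun :: "real \<Rightarrow> real \<Rightarrow> real \<Rightarrow> real \<Rightarrow> real \<Rightarrow> real" where
  "Gfun \<alpha> \<beta> L lam t =
     (1 + \<alpha> * lam) * (Hfun \<alpha> \<beta> L t)\<^sup>2
     - \<alpha> * (1 - lam) * (1 - Hfun \<alpha> \<beta> L t)\<^sup>2
     - \<beta> * L * t - L * t\<^sup>2 / 2
     - \<bar>1 + \<alpha> * (2 * lam - 1)\<bar> * Hfun \<alpha> \<beta> L t * (1 - Hfun \<alpha> \<beta> L t)"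

definition tau3 :: "real \<Rightarrow> real \<Rightarrow> real \<Rightarrow> real \<Rightarrow> real" where
  "tau3 \<alpha> \<beta> L lam = (THE t. 0 < t \<and> t < tau2 \<alpha> \<beta> L \<and> Gfun \<alpha> \<beta> L lam t = 0)"

definition argmin_set :: "('a \<Rightarrow> real) \<Rightarrow> 'a set" where
  "argmin_set \<phi> = {x. \<forall>y. \<phi> x \<le> \<phi> y}"

text \<open>varphi_{z,lam}(t) = 1/2 d/dt |xdot_z(t)|^2 + lam * alpha / t * |xdot_z(t)|^2,
  where xd z is the velocity of the trajectory x_z.\<close>
definition varphi :: "('z \<Rightarrow> real \<Rightarrow> 'a::real_normed_vector) \<Rightarrow> real \<Rightarrow> real \<Rightarrow> 'z \<Rightarrow> real \<Rightarrow> real" where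
  "varphi xd \<alpha> lam z t =
     (1/2) * deriv (\<lambda>s. (norm (xd z s))\<^sup>2) t + lam * \<alpha> / t * (norm (xd z t))\<^sup>2"

text \<open>T^lam(z) = inf {t > 0. varphi_{z,lam}(t) \<le> 0}, in the extended reals
  (infimum of the empty set is +infinity).\<close>
definition Tlam :: "('z \<Rightarrow> real \<Rightarrow> 'a::real_normed_vector) \<Rightarrow> real \<Rightarrow> real \<Rightarrow> 'z \<Rightarrow> ereal" where
  "Tlam xd \<alpha> lam z = Inf (ereal ` {t. 0 < t \<and> varphi xd \<alpha> lam z t \<le> 0})"

end

theory Submission
  imports Defs
begin

(*
  Fix z outside argmin phi, write g = grad phi z and d = alpha + 1.  The ODE says precisely that
  W(r) = r^alpha xd(r) + r^(alpha+1)/d g has derivative r^alpha (g - beta hess(x) xd - grad(x)),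
  which the Lipschitz bound on grad phi controls by the velocity alone.  Hence a bound
  |xd(r)| <= K r on (0, s] improves to |xd(s) + s/d g| <= K s (1 - H(s)), and feeding the optimal
  K back into this gives K <= |g| / (d H(t)) as long as H(t) > 1/2, i.e. t < tau2.  Inserted into
  varphi(t) = <xd, xdd> + lambda alpha/t |xd|^2 these bounds give varphi(t) >= K^2 t G(t).
  Finally G is decreasing on [0, tau2] with G(0) > 0 > G(tau2), so it is positive before tau3.
*)

lemma has_derivative_norm_le_lipschitz:
  fixes g :: "'a::real_normed_vector \<Rightarrow> 'b::real_normed_vector"
  assumes deriv: "(g has_derivative D) (at y)"
    and lipschitz: "\<And>u v. norm (g u - g v) \<le> L * norm (u - v)"
  shows "norm (D h) \<le> L * norm h"
proof -
  interpret D: bounded_linear D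
    using deriv by (rule has_derivative_bounded_linear)
  define G where "G d = g (y + d *\<^sub>R h)" for d :: real
  have "((\<lambda>d. y + d *\<^sub>R h) has_derivative (\<lambda>d. d *\<^sub>R h)) (at 0)"
    by (auto intro!: derivative_eq_intros)
  moreover have "(g has_derivative D) (at (y + 0 *\<^sub>R h))"
    using deriv by simp
  ultimately have "(G has_derivative (\<lambda>d. D (d *\<^sub>R h))) (at 0)"
    unfolding G_def by (rule has_derivative_compose)
  then have "(G has_derivative (\<lambda>d. d *\<^sub>R D h)) (at 0)"
    by (simp add: D.scaleR)
  then have "((\<lambda>d. norm (G (0 + d) - G 0 - d *\<^sub>R D h) / norm d) \<longlongrightarrow> 0) (at 0)"
    by (simp add: has_derivative_at)
  moreover have "norm (G d - G 0 - d *\<^sub>R D h) / norm d = norm ((G d - G 0) /\<^sub>R d - D h)"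
    if "d \<noteq> 0" for d
  proof -
    have "G d - G 0 - d *\<^sub>R D h = d *\<^sub>R ((G d - G 0) /\<^sub>R d - D h)"
      using that by (simp add: scaleR_diff_right)
    then show ?thesis using that by simp
  qed
  ultimately have "((\<lambda>d. norm ((G d - G 0) /\<^sub>R d - D h)) \<longlongrightarrow> 0) (at 0)"
    by (elim Lim_transform_eventually) (auto simp: eventually_at_filter)
  then have "((\<lambda>d. (G d - G 0) /\<^sub>R d) \<longlongrightarrow> D h) (at 0)"
    by (simp add: tendsto_norm_zero_iff LIM_zero_iff)
  moreover have "norm ((G d - G 0) /\<^sub>R d) \<le> L * norm h" if "d \<noteq> 0" for d
  proof -
    have "norm ((G d - G 0) /\<^sub>R d) = norm (G d - G 0) / \<bar>d\<bar>"
      by (simp add: divide_inverse_commute)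
    also have "\<dots> \<le> L * norm h"
      using lipschitz[of "y + d *\<^sub>R h" y] that by (simp add: G_def pos_divide_le_eq mult_ac)
    finally show ?thesis .
  qed
  ultimately show ?thesis
    by (intro tendsto_upperbound[OF tendsto_norm]) (auto simp: eventually_at_filter)
qed

lemma convex_on_stationary_point_minimum:
  fixes f :: "'a::real_normed_vector \<Rightarrow> real"
  assumes convex: "convex_on UNIV f" and stationary: "(f has_derivative (\<lambda>h. 0)) (at z)"
  shows "f z \<le> f y"
proof -
  define F where "F s = f (z + s *\<^sub>R (y - z))" for s :: real
  have "convex_on UNIV F"
    unfolding convex_on_def F_def
  proof (intro conjI ballI allI impI)
    fix a b u v :: real assume uv: "u \<ge> 0" "v \<ge> 0" "u + v = 1"
    have "z + (u * a + v * b) *\<^sub>R (y - z) = u *\<^sub>R (z + a *\<^sub>R (y - z)) + v *\<^sub>R (z + b *\<^sub>R (y - z))"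
      using uv by (simp add: algebra_simps flip: scaleR_add_left)
    then show "f (z + (u *\<^sub>R a + v *\<^sub>R b) *\<^sub>R (y - z))
        \<le> u * f (z + a *\<^sub>R (y - z)) + v * f (z + b *\<^sub>R (y - z))"
      using convex uv unfolding convex_on_def by simp
  qed simp
  moreover have "(F has_real_derivative 0) (at 0)"
  proof -
    have "((\<lambda>s. z + s *\<^sub>R (y - z)) has_derivative (\<lambda>s. s *\<^sub>R (y - z))) (at 0)"
      by (auto intro!: derivative_eq_intros)
    moreover have "(f has_derivative (\<lambda>h. 0)) (at (z + 0 *\<^sub>R (y - z)))"
      using stationary by simp
    ultimately have "(F has_derivative (\<lambda>s. 0)) (at 0)"
      unfolding F_def by (rule has_derivative_compose)
    then show ?thesis by (simp add: has_field_derivative_def mult_zero_left[abs_def])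
  qed
  ultimately have "F 1 - F 0 \<ge> 0 * (1 - 0)"
    by (intro convex_on_imp_above_tangent[where A = UNIV]) auto
  then show ?thesis by (simp add: F_def)
qed

lemma has_real_derivative_powr_div:
  assumes "c > 0" and "r > 0"
  shows "((\<lambda>r. r powr c / c) has_real_derivative r powr (c - 1)) (at r)"
  using DERIV_cdivide[OF has_real_derivative_powr[OF assms(2)], of c c] assms(1) by simp

locale hessian_damped_params =
  fixes \<alpha> \<beta> L lam :: real
  assumes alpha_pos: "\<alpha> > 0" and beta_nonneg: "\<beta> \<ge> 0" and L_pos: "L > 0"
    and lam_nonneg: "0 \<le> lam" and lam_le_1: "lam \<le> 1"
begin

abbreviation "H \<equiv> Hfun \<alpha> \<beta> L"
abbreviation "G \<equiv> Gfun \<alpha> \<beta> L lam"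
abbreviation "T1 \<equiv> tau1 \<alpha> \<beta> L"
abbreviation "T2 \<equiv> tau2 \<alpha> \<beta> L"
abbreviation "T3 \<equiv> tau3 \<alpha> \<beta> L lam"

lemma H_0 [simp]: "H 0 = 1"
  by (simp add: Hfun_def)

lemma H_strict_antimono:
  assumes "0 \<le> s" "s < t"
  shows "H t < H s"
proof -
  have "\<beta> * L * s / (\<alpha> + 2) \<le> \<beta> * L * t / (\<alpha> + 2)"
    using assms alpha_pos beta_nonneg L_pos by (intro divide_right_mono mult_left_mono) auto
  moreover have "L * s\<^sup>2 / (2 * (\<alpha> + 3)) < L * t\<^sup>2 / (2 * (\<alpha> + 3))"
    using assms alpha_pos L_pos
    by (intro divide_strict_right_mono mult_strict_left_mono power_strict_mono) auto
  ultimately show ?thesis by (simp add: Hfun_def)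
qed

lemma H_antimono: "0 \<le> s \<Longrightarrow> s \<le> t \<Longrightarrow> H t \<le> H s"
  using H_strict_antimono[of s t] by (cases "s = t") auto

lemma H_le_1: "0 \<le> t \<Longrightarrow> H t \<le> 1"
  using H_antimono[of 0 t] by simp

definition tau_shift :: real where
  "tau_shift = (\<alpha> + 3) / (\<alpha> + 2) * \<beta>"

lemma tau_shift_nonneg: "tau_shift \<ge> 0"
  using alpha_pos beta_nonneg by (simp add: tau_shift_def)

lemma tau_shift_sq: "tau_shift\<^sup>2 = ((\<alpha> + 3) / (\<alpha> + 2))\<^sup>2 * \<beta>\<^sup>2"
  unfolding tau_shift_def by (rule power_mult_distrib)

lemma tau1_eq: "T1 = - tau_shift + sqrt (tau_shift\<^sup>2 + 2 * (\<alpha> + 3) / L)"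
  unfolding tau1_def tau_shift_sq by (simp add: tau_shift_def)

lemma tau2_eq: "T2 = - tau_shift + sqrt (tau_shift\<^sup>2 + (\<alpha> + 3) / L)"
  unfolding tau2_def tau_shift_sq by (simp add: tau_shift_def)

lemma tau2_pos: "T2 > 0"
proof -
  have "tau_shift = sqrt (tau_shift\<^sup>2)"
    using tau_shift_nonneg by simp
  also have "\<dots> < sqrt (tau_shift\<^sup>2 + (\<alpha> + 3) / L)"
    using alpha_pos L_pos by (intro real_sqrt_less_mono) simp
  finally show ?thesis by (simp add: tau2_eq)
qed

lemma tau2_less_tau1: "T2 < T1"
proof -
  have "(\<alpha> + 3) / L < 2 * (\<alpha> + 3) / L"
    using alpha_pos L_pos by (simp add: divide_strict_right_mono)
  then show ?thesis by (simp add: tau1_eq tau2_eq)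
qed

lemma H_tau2: "H T2 = 1 / 2"
proof -
  have "(T2 + tau_shift)\<^sup>2 = tau_shift\<^sup>2 + (\<alpha> + 3) / L"
    using alpha_pos L_pos by (simp add: tau2_eq)
  then have T2_eq: "T2\<^sup>2 + 2 * tau_shift * T2 = (\<alpha> + 3) / L"
    by (simp add: power2_eq_square algebra_simps)
  have "1 - H T2 = \<beta> * L * T2 / (\<alpha> + 2) + L * T2\<^sup>2 / (2 * (\<alpha> + 3))"
    by (simp add: Hfun_def)
  also have "\<dots> = L / (2 * (\<alpha> + 3)) * (T2\<^sup>2 + 2 * tau_shift * T2)"
    using alpha_pos by (simp add: tau_shift_def field_simps)
  also have "\<dots> = 1 / 2"
    using alpha_pos L_pos by (simp only: T2_eq) simp
  finally show ?thesis by simp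
qed

lemma H_ge_half: "0 \<le> t \<Longrightarrow> t \<le> T2 \<Longrightarrow> H t \<ge> 1 / 2"
  using H_antimono[of t T2] H_tau2 by simp

lemma H_gt_half: "0 \<le> t \<Longrightarrow> t < T2 \<Longrightarrow> H t > 1 / 2"
  using H_strict_antimono[of t T2] H_tau2 by simp

definition Gpoly :: "real \<Rightarrow> real" where
  "Gpoly h = (1 + \<alpha> * lam) * h\<^sup>2 - \<alpha> * (1 - lam) * (1 - h)\<^sup>2
     - \<bar>1 + \<alpha> * (2 * lam - 1)\<bar> * h * (1 - h)"

lemma G_eq: "G t = Gpoly (H t) - \<beta> * L * t - L * t\<^sup>2 / 2"
  by (simp add: Gfun_def Gpoly_def)

lemma Gpoly_mono:
  assumes "1 / 2 \<le> h1" "h1 \<le> h2" "h2 \<le> 1"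
  shows "Gpoly h1 \<le> Gpoly h2"
proof -
  let ?c = "\<bar>1 + \<alpha> * (2 * lam - 1)\<bar>"
  have "Gpoly h2 - Gpoly h1 = (h2 - h1) * ((1 + \<alpha> * lam) * (h1 + h2)
      + \<alpha> * (1 - lam) * (2 - h1 - h2) + ?c * (h1 + h2 - 1))"
    by (simp add: Gpoly_def power2_eq_square algebra_simps)
  moreover have
    "(1 + \<alpha> * lam) * (h1 + h2) + \<alpha> * (1 - lam) * (2 - h1 - h2) + ?c * (h1 + h2 - 1) \<ge> 0"
    using assms alpha_pos lam_nonneg lam_le_1 by (intro add_nonneg_nonneg mult_nonneg_nonneg) auto
  ultimately have "Gpoly h2 - Gpoly h1 \<ge> 0"
    using assms by simp
  then show ?thesis by simp
qed

lemma G_strict_antimono: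
  assumes "0 \<le> s" "s < t" "t \<le> T2"
  shows "G t < G s"
proof -
  have "Gpoly (H t) \<le> Gpoly (H s)"
    using assms H_ge_half[of t] H_antimono[of s t] H_le_1[of s] by (intro Gpoly_mono) auto
  moreover have "\<beta> * L * s \<le> \<beta> * L * t"
    using assms beta_nonneg L_pos by (intro mult_left_mono) auto
  moreover have "L * s\<^sup>2 < L * t\<^sup>2"
    using assms L_pos by (simp add: power_strict_mono)
  ultimately show ?thesis
    using G_eq[of s] G_eq[of t] by linarith
qed

lemma G_0_pos: "G 0 > 0"
proof -
  have "1 + \<alpha> * lam > 0"
    using alpha_pos lam_nonneg by (simp add: add_pos_nonneg)
  then show ?thesis by (simp add: G_eq Gpoly_def)
qed

lemma G_tau2_neg: "G T2 < 0"
proof -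
  have "Gpoly (1 / 2) = (1 + \<alpha> * (2 * lam - 1) - \<bar>1 + \<alpha> * (2 * lam - 1)\<bar>) / 4"
    by (simp add: Gpoly_def power2_eq_square field_simps)
  then have "Gpoly (1 / 2) \<le> 0"
    by simp
  moreover have "\<beta> * L * T2 \<ge> 0" "L * T2\<^sup>2 > 0"
    using beta_nonneg L_pos tau2_pos by simp_all
  moreover have "G T2 = Gpoly (1 / 2) - \<beta> * L * T2 - L * T2\<^sup>2 / 2"
    by (simp add: G_eq H_tau2)
  ultimately show ?thesis by linarith
qed

lemma continuous_on_G: "continuous_on S G"
proof -
  have "continuous_on S H"
    unfolding Hfun_def using alpha_pos by (intro continuous_intros) auto
  then show ?thesis
    unfolding G_eq[abs_def] Gpoly_def by (intro continuous_intros) auto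
qed

lemma tau3_root: "0 < T3" "T3 < T2" "G T3 = 0"
proof -
  have "\<exists>t\<ge>0. t \<le> T2 \<and> G t = 0"
    by (rule IVT2') (use G_0_pos G_tau2_neg tau2_pos continuous_on_G in auto)
  then obtain t where t: "0 \<le> t" "t \<le> T2" "G t = 0"
    by blast
  have t_pos: "0 < t" using t G_0_pos by (cases "t = 0") auto
  have t_less: "t < T2" using t G_tau2_neg by (cases "t = T2") auto
  have unique: "s = t" if s: "0 < s" "s < T2" "G s = 0" for s
  proof (rule ccontr)
    assume "s \<noteq> t"
    then consider "s < t" | "t < s" by linarith
    then show False
    proof cases
      case 1
      then have "G t < G s" using s t by (intro G_strict_antimono) auto
      then show False using s t by simp
    next
      case 2
      then have "G s < G t" using s t_pos by (intro G_strict_antimono) auto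
      then show False using s t by simp
    qed
  qed
  have "T3 = t"
    unfolding tau3_def
  proof (rule the_equality)
    show "0 < t \<and> t < T2 \<and> G t = 0" using t t_pos t_less by blast
  qed (use unique in blast)
  then show "0 < T3" "T3 < T2" "G T3 = 0"
    using t t_pos t_less by simp_all
qed

lemma G_pos_below_tau3: "0 \<le> t \<Longrightarrow> t < T3 \<Longrightarrow> G t > 0"
  using G_strict_antimono[of t T3] tau3_root by simp

lemma kinetic_part_eq:
  fixes t h K a \<gamma> N E P :: real
  assumes t: "t > 0" and a: "a = t / (\<alpha> + 1)" and \<gamma>: "\<gamma> = (\<alpha> + 1) * h * K"
    and N_sq: "N\<^sup>2 = E\<^sup>2 - 2 * a * P + a\<^sup>2 * \<gamma>\<^sup>2"
  shows "- (\<alpha> / t) * N\<^sup>2 - (P - a * \<gamma>\<^sup>2) + lam * \<alpha> / t * N\<^sup>2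
    = K\<^sup>2 * t * ((1 + \<alpha> * lam) * h\<^sup>2) - P * (1 + \<alpha> * (2 * lam - 1)) / (\<alpha> + 1)
      - \<alpha> * (1 - lam) * E\<^sup>2 / t"
proof -
  have d: "\<alpha> + 1 > 0" using alpha_pos by simp
  have "- (\<alpha> / t) * N\<^sup>2 - (P - a * \<gamma>\<^sup>2) + lam * \<alpha> / t * N\<^sup>2
      = - (\<alpha> * (1 - lam) / t) * (E\<^sup>2 - 2 * a * P + a\<^sup>2 * \<gamma>\<^sup>2) - P + a * \<gamma>\<^sup>2"
    unfolding N_sq[symmetric] using t by (simp add: field_simps)
  also have "\<dots> = a * \<gamma>\<^sup>2 * (1 + \<alpha> * lam) / (\<alpha> + 1) - P * (1 + \<alpha> * (2 * lam - 1)) / (\<alpha> + 1)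
      - \<alpha> * (1 - lam) * E\<^sup>2 / t"
  proof -
    \<comment> \<open>\<open>field_simps\<close> needs the atom \<open>d\<close> in place of \<open>\<alpha> + 1\<close> to clear the denominators.\<close>
    have "- ((d - 1) * (1 - lam) / t) * (E\<^sup>2 - 2 * (t / d) * P + (t / d)\<^sup>2 * \<gamma>\<^sup>2)
          - P + t / d * \<gamma>\<^sup>2
        = t / d * \<gamma>\<^sup>2 * (1 + (d - 1) * lam) / d - P * (1 + (d - 1) * (2 * lam - 1)) / d
          - (d - 1) * (1 - lam) * E\<^sup>2 / t" if "d > 0" for d
      using that t by (simp add: field_simps power2_eq_square)
    from this[of "\<alpha> + 1"] show ?thesis
      using d by (simp add: a)
  qed
  also have "a * \<gamma>\<^sup>2 * (1 + \<alpha> * lam) / (\<alpha> + 1) = K\<^sup>2 * t * ((1 + \<alpha> * lam) * h\<^sup>2)"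
    unfolding a \<gamma> using d by (simp add: power2_eq_square)
  finally show ?thesis .
qed

text \<open>In the application \<open>N = norm u\<close>, \<open>E = norm (u + a *\<^sub>R g)\<close>, \<open>P = (u + a *\<^sub>R g) \<bullet> g\<close>,
  \<open>Q1 = u \<bullet> hess (x t) u\<close>, \<open>Q2 = u \<bullet> (grad (x t) - g)\<close> and \<open>X = norm (x t - z)\<close>,
  where \<open>u = xd t\<close>, \<open>g = grad z\<close> and \<open>\<gamma> = norm g\<close>; the left-hand side is then \<open>varphi t\<close>.\<close>

lemma G_lower_bound:
  fixes t h K a \<gamma> N E P Q1 Q2 X :: real
  assumes t: "t > 0" and h: "h > 0" and K: "K \<ge> 0"
    and a: "a = t / (\<alpha> + 1)" and \<gamma>: "\<gamma> = (\<alpha> + 1) * h * K"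
    and N_sq: "N\<^sup>2 = E\<^sup>2 - 2 * a * P + a\<^sup>2 * \<gamma>\<^sup>2"
    and N: "0 \<le> N" "N \<le> K * t" and E: "0 \<le> E" "E \<le> K * t * (1 - h)"
    and P: "\<bar>P\<bar> \<le> E * \<gamma>" and Q1: "Q1 \<le> L * N\<^sup>2" and Q2: "Q2 \<le> N * L * X"
    and X: "0 \<le> X" "X \<le> K * t\<^sup>2 / 2"
  shows "- (\<alpha> / t) * N\<^sup>2 - \<beta> * Q1 - Q2 - (P - a * \<gamma>\<^sup>2) + lam * \<alpha> / t * N\<^sup>2
    \<ge> K\<^sup>2 * t * (Gpoly h - \<beta> * L * t - L * t\<^sup>2 / 2)"
proof -
  define c where "c = 1 + \<alpha> * (2 * lam - 1)"
  have d: "\<alpha> + 1 > 0" using alpha_pos by simp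
  note main = kinetic_part_eq[OF t a \<gamma> N_sq, folded c_def]
  have "P * c \<le> E * \<gamma> * \<bar>c\<bar>"
    using P abs_ge_self[of "P * c"] mult_right_mono[OF P, of "\<bar>c\<bar>"] by (simp add: abs_mult)
  also have "\<dots> \<le> K * t * (1 - h) * \<gamma> * \<bar>c\<bar>"
    using E h K d by (intro mult_right_mono) (auto simp: \<gamma>)
  finally have "P * c / (\<alpha> + 1) \<le> K * t * (1 - h) * \<gamma> * \<bar>c\<bar> / (\<alpha> + 1)"
    using d by (simp add: divide_right_mono)
  also have "\<dots> = K\<^sup>2 * t * (\<bar>c\<bar> * h * (1 - h))"
    unfolding \<gamma> using d by (simp add: field_simps power2_eq_square)
  finally have P_bound: "P * c / (\<alpha> + 1) \<le> K\<^sup>2 * t * (\<bar>c\<bar> * h * (1 - h))" .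
  have "E\<^sup>2 \<le> (K * t * (1 - h))\<^sup>2"
    using E by (simp add: power_mono)
  then have "\<alpha> * (1 - lam) * E\<^sup>2 / t \<le> \<alpha> * (1 - lam) * (K * t * (1 - h))\<^sup>2 / t"
    using alpha_pos lam_le_1 t by (simp add: divide_right_mono mult_left_mono)
  also have "\<dots> = K\<^sup>2 * t * (\<alpha> * (1 - lam) * (1 - h)\<^sup>2)"
    using t by (simp add: field_simps power2_eq_square)
  finally have E_bound:
    "\<alpha> * (1 - lam) * E\<^sup>2 / t \<le> K\<^sup>2 * t * (\<alpha> * (1 - lam) * (1 - h)\<^sup>2)" .
  have "N\<^sup>2 \<le> (K * t)\<^sup>2"
    using N by (simp add: power_mono)
  then have "\<beta> * Q1 \<le> \<beta> * (L * (K * t)\<^sup>2)"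
    using Q1 L_pos beta_nonneg by (intro mult_left_mono) (auto intro: order_trans)
  also have "\<dots> = K\<^sup>2 * t * (\<beta> * L * t)"
    by (simp add: power2_eq_square)
  finally have Q1_bound: "\<beta> * Q1 \<le> K\<^sup>2 * t * (\<beta> * L * t)" .
  have "N * L * X \<le> K * t * L * (K * t\<^sup>2 / 2)"
    using N X L_pos K t by (intro mult_mono) auto
  also have "\<dots> = K\<^sup>2 * t * (L * t\<^sup>2 / 2)"
    by (simp add: power2_eq_square)
  finally have Q2_bound: "Q2 \<le> K\<^sup>2 * t * (L * t\<^sup>2 / 2)"
    using Q2 by linarith
  have "K\<^sup>2 * t * (Gpoly h - \<beta> * L * t - L * t\<^sup>2 / 2)
      = K\<^sup>2 * t * ((1 + \<alpha> * lam) * h\<^sup>2) - K\<^sup>2 * t * (\<alpha> * (1 - lam) * (1 - h)\<^sup>2)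
        - K\<^sup>2 * t * (\<bar>c\<bar> * h * (1 - h)) - K\<^sup>2 * t * (\<beta> * L * t) - K\<^sup>2 * t * (L * t\<^sup>2 / 2)"
    by (simp add: Gpoly_def c_def algebra_simps)
  then show ?thesis
    using main P_bound E_bound Q1_bound Q2_bound by linarith
qed

end

locale hessian_damped_flow = hessian_damped_params \<alpha> \<beta> L lam
  for \<alpha> \<beta> L lam :: real +
  fixes \<phi> :: "'a::real_inner \<Rightarrow> real"
    and grad :: "'a \<Rightarrow> 'a"
    and hess :: "'a \<Rightarrow> ('a \<Rightarrow>\<^sub>L 'a)"
    and x xd xdd :: "'a \<Rightarrow> real \<Rightarrow> 'a"
  assumes grad: "\<And>y. (\<phi> has_derivative (\<lambda>h. grad y \<bullet> h)) (at y)"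
    and hess: "\<And>y. (grad has_derivative blinfun_apply (hess y)) (at y)"
    and convex: "convex_on UNIV \<phi>"
    and lipschitz: "\<And>y w. norm (grad y - grad w) \<le> L * norm (y - w)"
    and x_C1: "\<And>z t. t \<ge> 0 \<Longrightarrow> (x z has_vector_derivative xd z t) (at t within {0..})"
    and xd_cont: "\<And>z. continuous_on {0..} (xd z)"
    and xd_C1: "\<And>z t. t > 0 \<Longrightarrow> (xd z has_vector_derivative xdd z t) (at t)"
    and ode: "\<And>z t. t > 0 \<Longrightarrow>
       xdd z t + (\<alpha> / t) *\<^sub>R xd z t + \<beta> *\<^sub>R (hess (x z t) (xd z t)) + grad (x z t) = 0"
    and init_pos: "\<And>z. x z 0 = z"
    and init_vel: "\<And>z. xd z 0 = 0"
begin

definition drift :: "'a \<Rightarrow> real \<Rightarrow> 'a" where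
  "drift z t = \<beta> *\<^sub>R hess (x z t) (xd z t) + grad (x z t)"

lemma xdd_eq:
  assumes "t > 0"
  shows "xdd z t = - (\<alpha> / t) *\<^sub>R xd z t - drift z t"
proof -
  have "xdd z t + ((\<alpha> / t) *\<^sub>R xd z t + drift z t) = 0"
    using ode[OF assms] by (simp add: drift_def add.assoc)
  then show ?thesis
    by (simp add: add_eq_0_iff2)
qed

lemma hess_norm_le: "norm (hess y v) \<le> L * norm v"
  by (rule has_derivative_norm_le_lipschitz[OF hess lipschitz])

lemma grad_nonzero_outside_argmin:
  assumes "z \<notin> argmin_set \<phi>"
  shows "grad z \<noteq> 0"
proof
  assume "grad z = 0"
  then have "(\<phi> has_derivative (\<lambda>h. 0)) (at z)"
    using grad[of z] by simp
  then have "\<phi> z \<le> \<phi> y" for y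
    by (rule convex_on_stationary_point_minimum[OF convex])
  then show False
    using assms by (simp add: argmin_set_def)
qed

lemma drift_deviation_le:
  "norm (drift z t - grad z) \<le> \<beta> * L * norm (xd z t) + L * norm (x z t - z)"
proof -
  have "norm (drift z t - grad z)
      \<le> norm (\<beta> *\<^sub>R hess (x z t) (xd z t)) + norm (grad (x z t) - grad z)"
    unfolding drift_def by (metis add_diff_eq norm_triangle_ineq)
  also have "norm (\<beta> *\<^sub>R hess (x z t) (xd z t)) \<le> \<beta> * (L * norm (xd z t))"
    using hess_norm_le[of "x z t" "xd z t"] beta_nonneg by (simp add: mult_left_mono)
  also have "norm (grad (x z t) - grad z) \<le> L * norm (x z t - z)"
    by (rule lipschitz)
  finally show ?thesis by (simp add: mult.assoc)
qed

lemma displacement_le: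
  assumes r: "r \<ge> 0" and q_cont: "continuous_on {0..r} q"
    and q_deriv: "\<And>s. 0 < s \<Longrightarrow> s < r \<Longrightarrow> (q has_real_derivative q' s) (at s)"
    and q'_bound: "\<And>s. 0 < s \<Longrightarrow> s < r \<Longrightarrow> norm (xd z s) \<le> q' s"
  shows "norm (x z r - z) \<le> q r - q 0"
proof (cases "r = 0")
  case False
  have "continuous_on {0..} (x z)"
    unfolding continuous_on_eq_continuous_within
    using x_C1 has_vector_derivative_continuous by blast
  then have "continuous_on {0..r} (x z)"
    by (rule continuous_on_subset) auto
  moreover have "(x z has_vector_derivative xd z s) (at s)" if "0 < s" for s
    using x_C1[of s z] that at_within_interior[of s "{0..}"] by simp
  ultimately have "norm (x z r - x z 0) \<le> q r - q 0"
    using False r q_cont q_deriv q'_bound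
    by (intro differentiable_bound_general)
       (auto simp: has_real_derivative_iff_has_vector_derivative)
  then show ?thesis by (simp add: init_pos)
qed (simp add: init_pos)

lemma displacement_le_linear:
  assumes "r \<ge> 0" and "\<And>s. 0 < s \<Longrightarrow> s < r \<Longrightarrow> norm (xd z s) \<le> B"
  shows "norm (x z r - z) \<le> B * r"
  using displacement_le[of r "\<lambda>s. B * s" "\<lambda>s. B"] assms
  by (auto intro!: continuous_intros derivative_eq_intros)

lemma displacement_le_quadratic:
  assumes "r \<ge> 0" and "\<And>s. 0 < s \<Longrightarrow> s < r \<Longrightarrow> norm (xd z s) \<le> K * s"
  shows "norm (x z r - z) \<le> K * r\<^sup>2 / 2"
proof -
  have "norm (x z r - z) \<le> K * r\<^sup>2 / 2 - K * 0\<^sup>2 / 2"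
  proof (rule displacement_le[OF assms(1)])
    show "continuous_on {0..r} (\<lambda>s. K * s\<^sup>2 / 2)"
      by (intro continuous_intros) auto
    show "((\<lambda>s. K * s\<^sup>2 / 2) has_real_derivative K * s) (at s)" for s
      by (auto intro!: derivative_eq_intros)
  qed (use assms(2) in auto)
  then show ?thesis by simp
qed

lemma weighted_velocity_deviation_le:
  assumes s: "s > 0" and p_cont: "continuous_on {0..s} p" and p_0: "p 0 = 0"
    and p_deriv: "\<And>r. 0 < r \<Longrightarrow> r < s \<Longrightarrow> (p has_real_derivative p' r) (at r)"
    and p'_bound: "\<And>r. 0 < r \<Longrightarrow> r < s \<Longrightarrow> r powr \<alpha> * norm (drift z r - grad z) \<le> p' r"
  shows "s powr \<alpha> * norm (xd z s + (s / (\<alpha> + 1)) *\<^sub>R grad z) \<le> p s"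
proof -
  define W where "W r = r powr \<alpha> *\<^sub>R xd z r + (r powr (\<alpha> + 1) / (\<alpha> + 1)) *\<^sub>R grad z" for r
  have W_deriv: "(W has_vector_derivative r powr \<alpha> *\<^sub>R (grad z - drift z r)) (at r)"
    if r: "0 < r" for r
  proof -
    have velocity_part: "((\<lambda>r. r powr \<alpha> *\<^sub>R xd z r) has_vector_derivative
        r powr \<alpha> *\<^sub>R xdd z r + (\<alpha> * r powr (\<alpha> - 1)) *\<^sub>R xd z r) (at r)"
      using has_real_derivative_powr[OF r] xd_C1[OF r] by (rule has_vector_derivative_scaleR)
    have "((\<lambda>r. r powr (\<alpha> + 1) / (\<alpha> + 1)) has_real_derivative r powr \<alpha>) (at r)"
      using has_real_derivative_powr_div[of "\<alpha> + 1" r] alpha_pos r by simp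
    then have gradient_part: "((\<lambda>r. (r powr (\<alpha> + 1) / (\<alpha> + 1)) *\<^sub>R grad z)
        has_vector_derivative r powr \<alpha> *\<^sub>R grad z) (at r)"
      using has_vector_derivative_scaleR[OF _ has_vector_derivative_const[of "grad z"]] by simp
    have "(W has_vector_derivative r powr \<alpha> *\<^sub>R xdd z r
        + (\<alpha> * r powr (\<alpha> - 1)) *\<^sub>R xd z r + r powr \<alpha> *\<^sub>R grad z) (at r)"
      unfolding W_def using velocity_part gradient_part by (rule has_vector_derivative_add)
    moreover have "r powr (\<alpha> - 1) = r powr \<alpha> / r"
      using r by (simp add: powr_diff)
    ultimately show ?thesis
      using r by (simp add: xdd_eq scaleR_diff_right algebra_simps)
  qed
  have W_cont: "continuous_on {0..s} W"
    unfolding W_def using alpha_pos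
    by (intro continuous_intros continuous_on_powr' continuous_on_subset[OF xd_cont]) auto
  have "norm (W s - W 0) \<le> p s - p 0"
  proof (rule differentiable_bound_general[OF s W_cont p_cont W_deriv])
    fix r assume r: "0 < r" "r < s"
    then show "(p has_vector_derivative p' r) (at r)"
      using p_deriv by (simp add: has_real_derivative_iff_has_vector_derivative)
    show "norm (r powr \<alpha> *\<^sub>R (grad z - drift z r)) \<le> p' r"
      using p'_bound[OF r] by (simp add: norm_minus_commute)
  qed
  moreover have "W 0 = 0"
    by (simp add: W_def init_vel)
  moreover have "W s = s powr \<alpha> *\<^sub>R (xd z s + (s / (\<alpha> + 1)) *\<^sub>R grad z)"
    using s by (simp add: W_def powr_add scaleR_add_right)
  ultimately show ?thesis
    using p_0 s by simp
qed

lemma velocity_le_deviation: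
  assumes "s \<ge> 0"
  shows "norm (xd z s) \<le> norm (xd z s + (s / (\<alpha> + 1)) *\<^sub>R grad z) + s / (\<alpha> + 1) * norm (grad z)"
  using norm_triangle_ineq4[of "xd z s + (s / (\<alpha> + 1)) *\<^sub>R grad z" "(s / (\<alpha> + 1)) *\<^sub>R grad z"]
    assms alpha_pos by simp

lemma velocity_deviation_le_uniform:
  assumes B: "\<And>r. 0 \<le> r \<Longrightarrow> r \<le> t \<Longrightarrow> norm (xd z r) \<le> B" and s: "0 < s" "s \<le> t"
  shows "norm (xd z s + (s / (\<alpha> + 1)) *\<^sub>R grad z) \<le> L * B * (\<beta> + t) * s / (\<alpha> + 1)"
proof -
  define D where "D = L * B * (\<beta> + t)"
  have B_nonneg: "B \<ge> 0"
    using B[of 0] s by (simp add: init_vel)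
  have "s powr \<alpha> * norm (xd z s + (s / (\<alpha> + 1)) *\<^sub>R grad z) \<le> D * (s powr (\<alpha> + 1) / (\<alpha> + 1))"
  proof (rule weighted_velocity_deviation_le[OF s(1)])
    show "continuous_on {0..s} (\<lambda>r. D * (r powr (\<alpha> + 1) / (\<alpha> + 1)))"
      using alpha_pos by (intro continuous_intros continuous_on_powr') auto
    fix r assume r: "0 < r" "r < s"
    show "((\<lambda>r. D * (r powr (\<alpha> + 1) / (\<alpha> + 1))) has_real_derivative D * r powr \<alpha>) (at r)"
      using DERIV_cmult[OF has_real_derivative_powr_div[of "\<alpha> + 1" r], of D] alpha_pos r by simp
    have "norm (drift z r - grad z) \<le> \<beta> * L * norm (xd z r) + L * norm (x z r - z)"
      by (rule drift_deviation_le)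
    also have "\<dots> \<le> \<beta> * L * B + L * (B * t)"
    proof (intro add_mono mult_left_mono)
      show "norm (xd z r) \<le> B" using B r s by simp
      have "norm (x z r - z) \<le> B * r"
        using r s B by (intro displacement_le_linear) auto
      also have "\<dots> \<le> B * t" using r s B_nonneg by (intro mult_left_mono) auto
      finally show "norm (x z r - z) \<le> B * t" .
    qed (use beta_nonneg L_pos in auto)
    also have "\<dots> = D" by (simp add: D_def algebra_simps)
    finally have "norm (drift z r - grad z) * r powr \<alpha> \<le> D * r powr \<alpha>"
      by (rule mult_right_mono) simp
    then show "r powr \<alpha> * norm (drift z r - grad z) \<le> D * r powr \<alpha>"
      by (simp add: mult.commute)
  qed simp
  also have "\<dots> = s powr \<alpha> * (D * s / (\<alpha> + 1))"
    using s by (simp add: powr_add)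
  finally show ?thesis
    unfolding D_def by (rule mult_left_le_imp_le) (use s in simp)
qed

lemma velocity_le_linear:
  assumes t: "t > 0"
  obtains C where "\<And>s. 0 < s \<Longrightarrow> s \<le> t \<Longrightarrow> norm (xd z s) \<le> C * s"
proof -
  have "bounded (xd z ` {0..t})"
    by (intro compact_imp_bounded compact_continuous_image continuous_on_subset[OF xd_cont]) auto
  then obtain B where "\<forall>v \<in> xd z ` {0..t}. norm v \<le> B"
    unfolding bounded_iff by blast
  then have B: "\<And>s. 0 \<le> s \<Longrightarrow> s \<le> t \<Longrightarrow> norm (xd z s) \<le> B"
    by simp
  show ?thesis
  proof
    fix s assume s: "0 < s" "s \<le> t"
    have "norm (xd z s) \<le> L * B * (\<beta> + t) * s / (\<alpha> + 1) + s / (\<alpha> + 1) * norm (grad z)"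
      using velocity_le_deviation[of s z] velocity_deviation_le_uniform[OF B s] s by simp
    also have "\<dots> = (L * B * (\<beta> + t) + norm (grad z)) / (\<alpha> + 1) * s"
      by (simp add: add_divide_distrib algebra_simps)
    finally show "norm (xd z s) \<le> (L * B * (\<beta> + t) + norm (grad z)) / (\<alpha> + 1) * s" .
  qed
qed

lemma drift_deviation_le_linear:
  assumes velocity: "\<And>r. 0 < r \<Longrightarrow> r \<le> t \<Longrightarrow> norm (xd z r) \<le> K * r"
    and r: "0 < r" "r \<le> t"
  shows "norm (drift z r - grad z) \<le> L * K * (\<beta> * r + r\<^sup>2 / 2)"
proof -
  have "norm (drift z r - grad z) \<le> \<beta> * L * norm (xd z r) + L * norm (x z r - z)"
    by (rule drift_deviation_le)
  also have "\<dots> \<le> \<beta> * L * (K * r) + L * (K * r\<^sup>2 / 2)"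
  proof (intro add_mono mult_left_mono)
    show "norm (xd z r) \<le> K * r" using velocity r by simp
    show "norm (x z r - z) \<le> K * r\<^sup>2 / 2"
      using r by (intro displacement_le_quadratic) (auto intro!: velocity)
  qed (use beta_nonneg L_pos in auto)
  also have "\<dots> = L * K * (\<beta> * r + r\<^sup>2 / 2)"
    by (simp add: algebra_simps)
  finally show ?thesis .
qed

lemma velocity_deviation_le:
  assumes K: "K \<ge> 0" and velocity: "\<And>r. 0 < r \<Longrightarrow> r \<le> t \<Longrightarrow> norm (xd z r) \<le> K * r"
    and s: "0 < s" "s \<le> t"
  shows "norm (xd z s + (s / (\<alpha> + 1)) *\<^sub>R grad z) \<le> K * s * (1 - H s)"
proof -
  define p where "p r = L * K * (\<beta> * (r powr (\<alpha> + 2) / (\<alpha> + 2)) + r powr (\<alpha> + 3) / (\<alpha> + 3) / 2)" for r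
  have "s powr \<alpha> * norm (xd z s + (s / (\<alpha> + 1)) *\<^sub>R grad z) \<le> p s"
  proof (rule weighted_velocity_deviation_le[OF s(1)])
    show "continuous_on {0..s} p"
      unfolding p_def using alpha_pos by (intro continuous_intros continuous_on_powr') auto
    show "p 0 = 0" by (simp add: p_def)
    fix r assume r: "0 < r" "r < s"
    have "((\<lambda>r. r powr (\<alpha> + 2) / (\<alpha> + 2)) has_real_derivative r powr (\<alpha> + 1)) (at r)"
      using has_real_derivative_powr_div[of "\<alpha> + 2" r] alpha_pos r by (simp add: add.commute)
    moreover have "((\<lambda>r. r powr (\<alpha> + 3) / (\<alpha> + 3)) has_real_derivative r powr (\<alpha> + 2)) (at r)"
      using has_real_derivative_powr_div[of "\<alpha> + 3" r] alpha_pos r by (simp add: add.commute)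
    ultimately show "(p has_real_derivative L * K * (\<beta> * r powr (\<alpha> + 1) + r powr (\<alpha> + 2) / 2)) (at r)"
      unfolding p_def by (intro DERIV_cmult DERIV_add DERIV_cdivide)
    have "r powr \<alpha> * norm (drift z r - grad z) \<le> r powr \<alpha> * (L * K * (\<beta> * r + r\<^sup>2 / 2))"
      using drift_deviation_le_linear[OF velocity, of r] r s by (intro mult_left_mono) auto
    also have "\<dots> = L * K * (\<beta> * r powr (\<alpha> + 1) + r powr (\<alpha> + 2) / 2)"
      using r by (simp add: powr_add power2_eq_square algebra_simps)
    finally show "r powr \<alpha> * norm (drift z r - grad z) \<le> L * K * (\<beta> * r powr (\<alpha> + 1) + r powr (\<alpha> + 2) / 2)" .
  qed
  also have "p s = s powr \<alpha> * (K * s * (1 - H s))"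
  proof -
    have powr_eq: "s powr (\<alpha> + 2) = s powr \<alpha> * s\<^sup>2" "s powr (\<alpha> + 3) = s powr \<alpha> * s ^ 3"
      using s by (simp_all add: powr_add)
    have H_eq: "1 - H s = \<beta> * L * s / (\<alpha> + 2) + L * s\<^sup>2 / (2 * (\<alpha> + 3))"
      by (simp add: Hfun_def)
    have "L * K * (\<beta> * (q * s\<^sup>2 / a) + q * s ^ 3 / b / 2)
        = q * (K * s * (\<beta> * L * s / a + L * s\<^sup>2 / (2 * b)))" for q a b
      by (simp add: algebra_simps power2_eq_square power3_eq_cube)
    then show ?thesis
      unfolding p_def powr_eq H_eq .
  qed
  finally show ?thesis
    using s by simp
qed

lemma velocity_le:
  assumes t: "0 < t" "t < T2" and r: "0 < r" "r \<le> t"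
  shows "norm (xd z r) \<le> norm (grad z) / ((\<alpha> + 1) * H t) * r"
proof -
  obtain C where C: "\<And>s. 0 < s \<Longrightarrow> s \<le> t \<Longrightarrow> norm (xd z s) \<le> C * s"
    using velocity_le_linear[OF t(1)] by blast
  define S where "S = (SUP s\<in>{0<..t}. norm (xd z s) / s)"
  have bdd: "bdd_above ((\<lambda>s. norm (xd z s) / s) ` {0<..t})"
    using C by (intro bdd_aboveI2[where M = C]) (auto simp: divide_le_eq)
  have S_bound: "norm (xd z s) \<le> S * s" if "0 < s" "s \<le> t" for s
    using cSUP_upper[OF _ bdd, of s] that by (simp add: S_def divide_le_eq)
  have S_nonneg: "S \<ge> 0"
    using order_trans[OF norm_ge_zero S_bound[of t]] t by (simp add: zero_le_mult_iff)
  define \<gamma> where "\<gamma> = norm (grad z)"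
  have "(SUP s\<in>{0<..t}. norm (xd z s) / s) \<le> \<gamma> / (\<alpha> + 1) + S * (1 - H t)"
  proof (rule cSUP_least)
    show "{0<..t} \<noteq> {}" using t by simp
    fix s assume "s \<in> {0<..t}"
    then have s: "0 < s" "s \<le> t" by auto
    have "norm (xd z s) \<le> S * s * (1 - H s) + s * (\<gamma> / (\<alpha> + 1))"
      using velocity_le_deviation[of s z] velocity_deviation_le[OF S_nonneg S_bound s] s
      by (simp add: \<gamma>_def)
    also have "\<dots> \<le> S * s * (1 - H t) + s * (\<gamma> / (\<alpha> + 1))"
      using H_antimono[of s t] S_nonneg s by (simp add: mult_left_mono)
    also have "\<dots> = (\<gamma> / (\<alpha> + 1) + S * (1 - H t)) * s"
      by (simp add: algebra_simps)
    finally show "norm (xd z s) / s \<le> \<gamma> / (\<alpha> + 1) + S * (1 - H t)"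
      using s by (simp add: pos_divide_le_eq)
  qed
  then have "S * H t \<le> \<gamma> / (\<alpha> + 1)"
    by (simp add: algebra_simps flip: S_def)
  then have "S * ((\<alpha> + 1) * H t) \<le> \<gamma>"
    using alpha_pos by (simp add: pos_le_divide_eq mult_ac)
  moreover have "(\<alpha> + 1) * H t > 0"
    using H_gt_half[of t] t alpha_pos by simp
  ultimately have "S \<le> \<gamma> / ((\<alpha> + 1) * H t)"
    by (simp add: pos_le_divide_eq)
  then have "S * r \<le> \<gamma> / ((\<alpha> + 1) * H t) * r"
    using r by (intro mult_right_mono) auto
  then show ?thesis
    using S_bound[OF r] by (simp add: \<gamma>_def)
qed

lemma varphi_eq:
  assumes t: "t > 0"
  shows "varphi xd \<alpha> lam z t = xd z t \<bullet> xdd z t + lam * \<alpha> / t * (norm (xd z t))\<^sup>2"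
proof -
  have "((\<lambda>s. xd z s \<bullet> xd z s) has_real_derivative 2 * (xd z t \<bullet> xdd z t)) (at t)"
    using xd_C1[OF t] unfolding has_vector_derivative_def has_field_derivative_def
    by (auto intro!: derivative_eq_intros simp: fun_eq_iff inner_commute algebra_simps)
  then have "deriv (\<lambda>s. (norm (xd z s))\<^sup>2) t = 2 * (xd z t \<bullet> xdd z t)"
    by (simp add: power2_norm_eq_inner DERIV_imp_deriv)
  then show ?thesis
    by (simp add: varphi_def)
qed

lemma varphi_expansion:
  fixes z g :: 'a and t a :: real
  assumes t: "t > 0"
  defines "u \<equiv> xd z t"
  shows "varphi xd \<alpha> lam z t = - (\<alpha> / t) * (norm u)\<^sup>2 - \<beta> * (u \<bullet> hess (x z t) u)
      - u \<bullet> (grad (x z t) - g) - ((u + a *\<^sub>R g) \<bullet> g - a * (norm g)\<^sup>2) + lam * \<alpha> / t * (norm u)\<^sup>2"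
proof -
  have "u \<bullet> xdd z t = - (\<alpha> / t) * (norm u)\<^sup>2 - \<beta> * (u \<bullet> hess (x z t) u) - u \<bullet> grad (x z t)"
    unfolding xdd_eq[OF t] drift_def u_def
    by (simp add: inner_diff_right inner_add_right power2_norm_eq_inner)
  moreover have "u \<bullet> grad (x z t) = u \<bullet> (grad (x z t) - g) + ((u + a *\<^sub>R g) \<bullet> g - a * (norm g)\<^sup>2)"
    by (simp add: inner_diff_right inner_add_left power2_norm_eq_inner)
  ultimately show ?thesis
    using varphi_eq[OF t, of z] by (simp add: u_def)
qed

lemma hess_quadratic_le: "u \<bullet> hess y u \<le> L * (norm u)\<^sup>2"
proof -
  have "u \<bullet> hess y u \<le> norm u * norm (hess y u)"
    by (rule norm_cauchy_schwarz)
  also have "\<dots> \<le> norm u * (L * norm u)"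
    by (intro mult_left_mono hess_norm_le) auto
  finally show ?thesis
    by (simp add: power2_eq_square algebra_simps)
qed

lemma inner_grad_diff_le: "u \<bullet> (grad y - grad w) \<le> norm u * L * norm (y - w)"
proof -
  have "u \<bullet> (grad y - grad w) \<le> norm u * norm (grad y - grad w)"
    by (rule norm_cauchy_schwarz)
  also have "\<dots> \<le> norm u * (L * norm (y - w))"
    by (intro mult_left_mono lipschitz) auto
  finally show ?thesis
    by (simp add: algebra_simps)
qed

lemma varphi_ge_G:
  assumes t: "0 < t" "t < T2"
  shows "varphi xd \<alpha> lam z t \<ge> (norm (grad z) / ((\<alpha> + 1) * H t))\<^sup>2 * t * G t"
proof -
  define g where "g = grad z"
  define \<gamma> where "\<gamma> = norm g"
  define h where "h = H t"
  define K where "K = \<gamma> / ((\<alpha> + 1) * h)"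
  define a where "a = t / (\<alpha> + 1)"
  define u where "u = xd z t"
  define e where "e = u + a *\<^sub>R g"
  have h: "h > 1 / 2"
    using H_gt_half[of t] t by (simp add: h_def)
  have K_nonneg: "K \<ge> 0"
    using h alpha_pos by (simp add: K_def \<gamma>_def)
  have velocity: "norm (xd z r) \<le> K * r" if "0 < r" "r \<le> t" for r
    using velocity_le[OF t that] by (simp add: K_def h_def \<gamma>_def g_def)
  have "varphi xd \<alpha> lam z t = - (\<alpha> / t) * (norm u)\<^sup>2 - \<beta> * (u \<bullet> hess (x z t) u)
      - u \<bullet> (grad (x z t) - g) - (e \<bullet> g - a * \<gamma>\<^sup>2) + lam * \<alpha> / t * (norm u)\<^sup>2"
    unfolding u_def e_def \<gamma>_def by (rule varphi_expansion[OF t(1)])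
  also have "\<dots> \<ge> K\<^sup>2 * t * (Gpoly h - \<beta> * L * t - L * t\<^sup>2 / 2)"
  proof (rule G_lower_bound[OF t(1) _ K_nonneg a_def])
    show "h > 0" using h by simp
    show "\<gamma> = (\<alpha> + 1) * h * K"
      using h alpha_pos by (simp add: K_def)
    show "(norm u)\<^sup>2 = (norm e)\<^sup>2 - 2 * a * (e \<bullet> g) + a\<^sup>2 * \<gamma>\<^sup>2"
      unfolding e_def \<gamma>_def power2_norm_eq_inner
      by (simp add: inner_add_left inner_add_right inner_commute power2_eq_square algebra_simps)
    show "norm u \<le> K * t"
      using velocity[OF t(1)] by (simp add: u_def)
    show "norm e \<le> K * t * (1 - h)"
      using velocity_deviation_le[OF K_nonneg velocity t(1) order_refl]
      by (simp add: e_def u_def a_def g_def h_def)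
    show "\<bar>e \<bullet> g\<bar> \<le> norm e * \<gamma>"
      unfolding \<gamma>_def by (rule Cauchy_Schwarz_ineq2)
    show "u \<bullet> hess (x z t) u \<le> L * (norm u)\<^sup>2"
      by (rule hess_quadratic_le)
    show "u \<bullet> (grad (x z t) - g) \<le> norm u * L * norm (x z t - z)"
      unfolding g_def by (rule inner_grad_diff_le)
    show "norm (x z t - z) \<le> K * t\<^sup>2 / 2"
      using t by (intro displacement_le_quadratic) (auto intro!: velocity)
  qed auto
  finally show ?thesis
    by (simp add: G_eq K_def h_def \<gamma>_def g_def)
qed

lemma varphi_pos_below_tau3:
  assumes z: "z \<notin> argmin_set \<phi>" and t: "0 < t" "t < T3"
  shows "varphi xd \<alpha> lam z t > 0"
proof -
  have t_T2: "t < T2"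
    using t tau3_root by linarith
  have "norm (grad z) / ((\<alpha> + 1) * H t) > 0"
    using grad_nonzero_outside_argmin[OF z] H_gt_half[of t] t t_T2 alpha_pos by simp
  then have "(norm (grad z) / ((\<alpha> + 1) * H t))\<^sup>2 * t * G t > 0"
    using G_pos_below_tau3[of t] t by (intro mult_pos_pos) auto
  then show ?thesis
    using varphi_ge_G[OF t(1) t_T2, of z] by linarith
qed

lemma tau3_le_Tlam:
  assumes "z \<notin> argmin_set \<phi>"
  shows "ereal T3 \<le> Tlam xd \<alpha> lam z"
  unfolding Tlam_def
proof (rule Inf_greatest)
  fix y assume "y \<in> ereal ` {t. 0 < t \<and> varphi xd \<alpha> lam z t \<le> 0}"
  then obtain t where t: "0 < t" "varphi xd \<alpha> lam z t \<le> 0" "y = ereal t"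
    by auto
  then have "\<not> t < T3"
    using varphi_pos_below_tau3[OF assms] by force
  then show "ereal T3 \<le> y"
    using t by simp
qed

end

theorem mainTheorem6:
  fixes \<phi> :: "real^'n \<Rightarrow> real"
    and grad :: "real^'n \<Rightarrow> real^'n"
    and hess :: "real^'n \<Rightarrow> ((real^'n) \<Rightarrow>\<^sub>L (real^'n))"
    and x xd xdd :: "real^'n \<Rightarrow> real \<Rightarrow> real^'n"
    and L \<alpha> \<beta> lam :: real
  assumes grad: "\<And>y. (\<phi> has_derivative (\<lambda>h. grad y \<bullet> h)) (at y)"
    and hess: "\<And>y. (grad has_derivative blinfun_apply (hess y)) (at y)"
    and hess_cont: "continuous_on UNIV hess"
    and convex: "convex_on UNIV \<phi>"
    and L_pos: "L > 0"
    and lipschitz: "\<And>y w. norm (grad y - grad w) \<le> L * norm (y - w)"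
    and has_min: "\<exists>y. \<forall>w. \<phi> y \<le> \<phi> w"
    and alpha: "\<alpha> > 0"
    and beta: "\<beta> \<ge> 0"
    and lam: "0 \<le> lam" "lam \<le> 1"
    and x_C1: "\<And>z t. t \<ge> 0 \<Longrightarrow> (x z has_vector_derivative xd z t) (at t within {0..})"
    and xd_cont: "\<And>z. continuous_on {0..} (xd z)"
    and xd_C1: "\<And>z t. t > 0 \<Longrightarrow> (xd z has_vector_derivative xdd z t) (at t)"
    and xdd_cont: "\<And>z. continuous_on {0<..} (xdd z)"
    and ode: "\<And>z t. t > 0 \<Longrightarrow>
       xdd z t + (\<alpha> / t) *\<^sub>R xd z t + \<beta> *\<^sub>R (hess (x z t) (xd z t)) + grad (x z t) = 0"
    and init_pos: "\<And>z. x z 0 = z"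
    and init_vel: "\<And>z. xd z 0 = 0"
  shows "tau1 \<alpha> \<beta> L > tau2 \<alpha> \<beta> L \<and> tau2 \<alpha> \<beta> L > tau3 \<alpha> \<beta> L lam \<and> tau3 \<alpha> \<beta> L lam > 0
     \<and> ereal (tau3 \<alpha> \<beta> L lam) \<le> (INF z \<in> - argmin_set \<phi>. Tlam xd \<alpha> lam z)"
proof -
  interpret hessian_damped_flow \<alpha> \<beta> L lam \<phi> grad hess x xd xdd
    by unfold_locales (use assms in auto)
  have "ereal (tau3 \<alpha> \<beta> L lam) \<le> (INF z \<in> - argmin_set \<phi>. Tlam xd \<alpha> lam z)"
    by (rule INF_greatest) (auto intro: tau3_le_Tlam)
  then show ?thesis
    using tau2_less_tau1 tau3_root by auto
qed

end
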